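(* Let $G$ be a strongly regular graph with parameters $(n,d,\lambda,\mu)$. If $\mathcal{P}_n,\mathcal{P}_{n-1},\dots,\mathcal{P}_k$ is a partial contraction sequence of $G$ of width at most $\operatorname{lb}_1(G)$, then $|P|\leq 2$ for every part $P\in\mathcal{P}_i$, for every $i$ with $k\leq i$ and $i\geq n-\lceil \operatorname{lb}_1(G)/2\rceil$.
   Context: All graphs are finite and simple. A graph of order $n$ is strongly regular with parameters $(n,d,\lambda,\mu)$ if it is $d$-regular and any two distinct adjacent vertices have exactly $\lambda$ common neighbors and any two distinct non-adjacent vertices have exactly $\mu$ common neighbors. For a partition $\mathcal{P}$ of $V(G)$, the quotient trigraph $G/\mathcal{P}$ has vertex set $\mathcal{P}$; two distinct parts $U,W$ are joined by a black edge if every pair $\{u,w\}$ with $u\in U,w\in W$ is an edge of $G$, are non-adjacent if no such pair is an edge, and are joined by a red edge otherwise; the red degree of a part is its number of incident red edges. A partial contraction sequence is a sequence $\mathcal{P}_n,\dots,\mathcal{P}_k$ of partitions of $V(G)$ where $\mathcal{P}_n$ is the partition into singletons and each $\mathcal{P}_i$ (which has $i$ parts) arises from $\mathcal{P}_{i+1}$ by merging two parts; its width is the maximum red degree over all $G/\mathcal{P}_i$. For $n\geq 2$, $\operatorname{lb}_1(G)$ is the minimum over all 2-element subsets $\{u,v\}\subseteq V(G)$ of the maximum red degree of $G/\mathcal{P}$ where $\mathcal{P}$ has $\{u,v\}$ as its only non-singleton part. *)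

theory Defs
  imports Complex_Main "HOL-Library.Disjoint_Sets"
begin

definition simple_graph :: "'a set \<Rightarrow> ('a \<Rightarrow> 'a \<Rightarrow> bool) \<Rightarrow> bool" where
  "simple_graph V E \<longleftrightarrow> finite V \<and> (\<forall>u v. E u v \<longrightarrow> E v u) \<and> (\<forall>v. \<not> E v v)
     \<and> (\<forall>u v. E u v \<longrightarrow> u \<in> V \<and> v \<in> V)"

definition strongly_regular ::
  "'a set \<Rightarrow> ('a \<Rightarrow> 'a \<Rightarrow> bool) \<Rightarrow> nat \<Rightarrow> nat \<Rightarrow> nat \<Rightarrow> nat \<Rightarrow> bool" where
  "strongly_regular V E n d lam mu \<longleftrightarrow> simple_graph V E \<and> card V = n
     \<and> (\<forall>v\<in>V. card {u\<in>V. E v u} = d)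
     \<and> (\<forall>u\<in>V. \<forall>v\<in>V. u \<noteq> v \<and> E u v \<longrightarrow> card {w\<in>V. E u w \<and> E v w} = lam)
     \<and> (\<forall>u\<in>V. \<forall>v\<in>V. u \<noteq> v \<and> \<not> E u v \<longrightarrow> card {w\<in>V. E u w \<and> E v w} = mu)"

definition red_edge :: "('a \<Rightarrow> 'a \<Rightarrow> bool) \<Rightarrow> 'a set \<Rightarrow> 'a set \<Rightarrow> bool" where
  "red_edge E U W \<longleftrightarrow> (\<exists>u\<in>U. \<exists>w\<in>W. E u w) \<and> (\<exists>u\<in>U. \<exists>w\<in>W. \<not> E u w)"

definition red_degree :: "('a \<Rightarrow> 'a \<Rightarrow> bool) \<Rightarrow> 'a set set \<Rightarrow> 'a set \<Rightarrow> nat" where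
  "red_degree E P U = card {W \<in> P. W \<noteq> U \<and> red_edge E U W}"

definition max_red_degree :: "('a \<Rightarrow> 'a \<Rightarrow> bool) \<Rightarrow> 'a set set \<Rightarrow> nat" where
  "max_red_degree E P = Max (insert 0 (red_degree E P ` P))"

definition singleton_partition :: "'a set \<Rightarrow> 'a set set" where
  "singleton_partition V = {{v} | v. v \<in> V}"

definition pair_partition :: "'a set \<Rightarrow> 'a \<Rightarrow> 'a \<Rightarrow> 'a set set" where
  "pair_partition V u v = insert {u, v} {{w} | w. w \<in> V - {u, v}}"

definition lb1 :: "'a set \<Rightarrow> ('a \<Rightarrow> 'a \<Rightarrow> bool) \<Rightarrow> nat" where
  "lb1 V E = Min {max_red_degree E (pair_partition V u v) | u v. u \<in> V \<and> v \<in> V \<and> u \<noteq> v}"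

text \<open>Partial contraction sequence P_n, ..., P_k (n = |V|), given as a function on
  indices, constrained only on {k..n}.\<close>
definition partial_contraction_sequence ::
  "'a set \<Rightarrow> (nat \<Rightarrow> 'a set set) \<Rightarrow> nat \<Rightarrow> bool" where
  "partial_contraction_sequence V Ps k \<longleftrightarrow>
     k \<le> card V \<and>
     Ps (card V) = singleton_partition V \<and>
     (\<forall>i\<in>{k..card V}. partition_on V (Ps i) \<and> card (Ps i) = i) \<and>
     (\<forall>i. k \<le> i \<and> i < card V \<longrightarrow>
        (\<exists>X\<in>Ps (Suc i). \<exists>Y\<in>Ps (Suc i). X \<noteq> Y \<and>
            Ps i = insert (X \<union> Y) (Ps (Suc i) - {X, Y})))"

definition sequence_width ::
  "'a set \<Rightarrow> ('a \<Rightarrow> 'a \<Rightarrow> bool) \<Rightarrow> (nat \<Rightarrow> 'a set set) \<Rightarrow> nat \<Rightarrow> nat" where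
  "sequence_width V E Ps k = Max ((\<lambda>i. max_red_degree E (Ps i)) ` {k..card V})"

end

theory Submission
  imports Defs
begin

(* Call w a distinguisher of a vertex set S if w \<notin> S and w is adjacent to some but not all
   vertices of S; for S = {x, y} these are the vertices of N(x) \<triangle> N(y) other than x, y.
   Contracting only x and y gives red degrees at most max 1 (number of distinguishers of
   {x, y}), so every pair has at least lb1 distinguishers once lb1 \<ge> 2.  Suppose a part Z of
   P_i contains three vertices a, b, c.  A vertex outside {a, b, c} distinguishing one of the
   pairs ab, ac, bc distinguishes exactly two of them, so {a, b, c} has at least (3 lb1 - 2)/2
   distinguishers.  Those outside Z lie in parts red to Z, and a part W holds at most
   1 + (|W| - 1) of them.  The excess \<Sum>(|W| - 1) over P_i is n - i \<le> \<lceil>lb1/2\<rceil>, so the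
   red degree of Z exceeds lb1. *)

definition distinguishers :: "'a set \<Rightarrow> ('a \<Rightarrow> 'a \<Rightarrow> bool) \<Rightarrow> 'a set \<Rightarrow> 'a set" where
  "distinguishers V E S = {w \<in> V - S. \<exists>x\<in>S. \<exists>y\<in>S. E x w \<and> \<not> E y w}"

lemma finite_distinguishers: "finite V \<Longrightarrow> finite (distinguishers V E S)"
  by (simp add: distinguishers_def)

lemma mem_distinguishers_pair_iff:
  "w \<in> distinguishers V E {x, y} \<longleftrightarrow> w \<in> V - {x, y} \<and> E x w \<noteq> E y w"
  by (auto simp: distinguishers_def)

lemma sum_card_distinguishers_pairs_le:
  assumes "finite V" and sym: "\<forall>u v. E u v \<longrightarrow> E v u"
    and "a \<noteq> b" "a \<noteq> c" "b \<noteq> c"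
  shows "card (distinguishers V E {a, b}) + card (distinguishers V E {a, c})
           + card (distinguishers V E {b, c})
         \<le> 2 * card (distinguishers V E {a, b, c}) + 2"
proof -
  let ?T = "V - {a, b, c}"
  let ?D = "\<lambda>x y. card {w \<in> ?T. E x w \<noteq> E y w}"
  have fT: "finite ?T" using \<open>finite V\<close> by simp
  have pair: "card (distinguishers V E {x, y}) \<le> ?D x y + of_bool (E x z \<noteq> E y z)"
    if "{x, y, z} = {a, b, c}" for x y z
  proof -
    have "distinguishers V E {x, y} \<subseteq> {w \<in> ?T. E x w \<noteq> E y w} \<union> {w. w = z \<and> E x z \<noteq> E y z}"
      using that by (auto simp: mem_distinguishers_pair_iff)
    then have "card (distinguishers V E {x, y})
        \<le> card ({w \<in> ?T. E x w \<noteq> E y w} \<union> {w. w = z \<and> E x z \<noteq> E y z})"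
      using fT by (intro card_mono) auto
    also have "\<dots> \<le> ?D x y + card {w. w = z \<and> E x z \<noteq> E y z}"
      by (rule card_Un_le)
    finally show ?thesis by (cases "E x z \<noteq> E y z") auto
  qed
  have "?D a b + ?D a c + ?D b c
      = (\<Sum>w\<in>?T. of_bool (E a w \<noteq> E b w) + of_bool (E a w \<noteq> E c w) + of_bool (E b w \<noteq> E c w))"
    using fT by (simp add: sum.distrib Int_def)
  also have "\<dots> = (\<Sum>w\<in>?T. 2 * of_bool (w \<in> distinguishers V E {a, b, c}))"
    by (rule sum.cong) (auto simp: distinguishers_def)
  also have "\<dots> = 2 * card (distinguishers V E {a, b, c})"
    using fT by (simp add: sum_distrib_left[symmetric] Int_def distinguishers_def)
  finally have "?D a b + ?D a c + ?D b c = 2 * card (distinguishers V E {a, b, c})" .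
  \<comment> \<open>by symmetry these compare the three edges ab, ac, bc, which cannot differ pairwise\<close>
  moreover have "of_bool (E a c \<noteq> E b c) + of_bool (E a b \<noteq> E c b) + of_bool (E b a \<noteq> E c a) \<le> (2::nat)"
    using sym by auto
  moreover note pair[of a b c] pair[of a c b] pair[of b c a]
  ultimately show ?thesis by (simp add: insert_commute)
qed

lemma red_edge_if_distinguisher:
  assumes "S \<subseteq> Z" "w \<in> W" "w \<in> distinguishers V E S"
  shows "red_edge E Z W"
  using assms unfolding distinguishers_def red_edge_def by blast

lemma finite_part:
  assumes "finite V" "partition_on V Q" "W \<in> Q"
  shows "finite W"
proof -
  have "W \<subseteq> V" using assms(3) partition_onD1[OF assms(2)] by auto
  then show ?thesis using assms(1) by (rule finite_subset)
qed

lemma card_le_sum_card_parts: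
  assumes "finite V" "partition_on V Q" "A \<subseteq> Q"
  shows "card A \<le> (\<Sum>W\<in>A. card W)"
proof -
  have "1 \<le> card W" if "W \<in> A" for W
  proof -
    have "W \<in> Q" using that assms(3) by blast
    then have "finite W" "W \<noteq> {}"
      using finite_part[OF assms(1,2)] partition_onD3[OF assms(2)] by auto
    then show ?thesis by (simp add: Suc_le_eq card_gt_0_iff)
  qed
  then show ?thesis
    using sum_mono[of A "\<lambda>_. 1" card] by simp
qed

lemma card_part_add_sum_card_parts_le:
  assumes "finite V" "partition_on V Q" "Z \<in> Q" "R \<subseteq> Q - {Z}"
  shows "card Z + (\<Sum>W\<in>R. card W) + card Q \<le> card V + card R + 1"
proof -
  have fQ: "finite Q" using finite_elements assms(1,2) .
  have "card V = (\<Sum>W\<in>Q. card W)"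
    using assms(1,2) finite_part by (intro product_partition) auto
  also have "\<dots> = card Z + (\<Sum>W\<in>Q - {Z} - R. card W) + (\<Sum>W\<in>R. card W)"
    using fQ assms(3,4) by (simp add: sum.remove sum.subset_diff)
  finally have "card V = card Z + (\<Sum>W\<in>Q - {Z} - R. card W) + (\<Sum>W\<in>R. card W)" .
  moreover have "card (Q - {Z} - R) \<le> (\<Sum>W\<in>Q - {Z} - R. card W)"
    using assms(1,2) by (rule card_le_sum_card_parts) blast
  moreover have "card (Q - {Z} - R) + card R = card (Q - {Z})"
    using assms(4) fQ card_mono[OF _ assms(4)] by (simp add: card_Diff_subset finite_subset)
  moreover have "card (Q - {Z}) + 1 = card Q"
    using card.remove[OF fQ assms(3)] by simp
  ultimately show ?thesis by linarith
qed

lemma card_parts_meeting_distinguishers_le_red_degree: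
  assumes "finite Q" "S \<subseteq> Z"
  shows "card {W \<in> Q. W \<noteq> Z \<and> W \<inter> distinguishers V E S \<noteq> {}} \<le> red_degree E Q Z"
proof -
  have "{W \<in> Q. W \<noteq> Z \<and> W \<inter> distinguishers V E S \<noteq> {}} \<subseteq> {W \<in> Q. W \<noteq> Z \<and> red_edge E Z W}"
    using red_edge_if_distinguisher[OF assms(2)] by blast
  then show ?thesis
    unfolding red_degree_def using assms(1) by (simp add: card_mono)
qed

lemma card_distinguishers_le_red_degree:
  assumes "finite V" "partition_on V Q" "Z \<in> Q" "S \<subseteq> Z"
  shows "card (distinguishers V E S) + card S + card Q \<le> red_degree E Q Z + card V + 1"
proof -
  define D where "D = distinguishers V E S"
  define R where "R = {W \<in> Q. W \<noteq> Z \<and> W \<inter> D \<noteq> {}}"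
  have V: "V = \<Union>Q" using partition_onD1[OF assms(2)] .
  have fQ: "finite Q" using finite_elements assms(1,2) .
  have fZ: "finite Z" using finite_part assms(1-3) .
  have "card R \<le> red_degree E Q Z"
    unfolding R_def D_def using card_parts_meeting_distinguishers_le_red_degree[OF fQ assms(4)] .
  have D_sub: "D \<subseteq> (Z - S) \<union> \<Union>R"
  proof
    fix w assume w: "w \<in> D"
    then have "w \<in> \<Union>Q" "w \<notin> S" using V by (auto simp: D_def distinguishers_def)
    then obtain W where "W \<in> Q" "w \<in> W" by blast
    with w \<open>w \<notin> S\<close> show "w \<in> (Z - S) \<union> \<Union>R"
      unfolding R_def by (cases "W = Z") auto
  qed
  have "(Z - S) \<union> \<Union>R \<subseteq> V"
    using assms(3) V unfolding R_def by blast
  then have "card D \<le> card ((Z - S) \<union> \<Union>R)"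
    using D_sub assms(1) by (meson card_mono finite_subset)
  also have "\<dots> \<le> card (Z - S) + card (\<Union>R)"
    by (rule card_Un_le)
  also have "\<dots> \<le> card (Z - S) + (\<Sum>W\<in>R. card W)"
    using card_Union_le_sum_card by simp
  finally have card_D: "card D \<le> card (Z - S) + (\<Sum>W\<in>R. card W)" .
  have "R \<subseteq> Q - {Z}" unfolding R_def by blast
  then have "card Z + (\<Sum>W\<in>R. card W) + card Q \<le> card V + card R + 1"
    using card_part_add_sum_card_parts_le[OF assms(1-3)] by blast
  moreover have "card (Z - S) + card S = card Z"
    using assms(4) fZ by (simp add: card_Diff_subset card_mono finite_subset)
  ultimately show ?thesis
    using card_D \<open>card R \<le> red_degree E Q Z\<close> unfolding D_def by linarith
qed

lemma red_degree_of_part_with_three_vertices: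
  assumes "finite V" "\<forall>u v. E u v \<longrightarrow> E v u" "partition_on V Q" "Z \<in> Q" "3 \<le> card Z"
    and dist: "\<forall>x\<in>V. \<forall>y\<in>V. x \<noteq> y \<longrightarrow> L \<le> card (distinguishers V E {x, y})"
  shows "3 * L + 2 * card Q + 2 \<le> 2 * red_degree E Q Z + 2 * card V"
proof -
  obtain S where "S \<subseteq> Z" "card S = 3"
    using obtain_subset_with_card_n[OF assms(5)] by metis
  then obtain a b c where S: "S = {a, b, c}" and abc: "a \<noteq> b" "b \<noteq> c" "a \<noteq> c"
    by (auto simp: card_3_iff)
  have "{a, b, c} \<subseteq> V"
    using \<open>S \<subseteq> Z\<close> S assms(4) partition_onD1[OF assms(3)] by blast
  then have "L \<le> card (distinguishers V E {a, b})" "L \<le> card (distinguishers V E {a, c})"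
    "L \<le> card (distinguishers V E {b, c})"
    using abc dist by auto
  then have "3 * L \<le> 2 * card (distinguishers V E {a, b, c}) + 2"
    using sum_card_distinguishers_pairs_le[OF assms(1,2), of a b c] abc by linarith
  moreover have "card (distinguishers V E {a, b, c}) + 3 + card Q \<le> red_degree E Q Z + card V + 1"
    using card_distinguishers_le_red_degree[OF assms(1,3,4) \<open>S \<subseteq> Z\<close>] S \<open>card S = 3\<close> by simp
  ultimately show ?thesis by linarith
qed

lemma max_red_degree_le_iff:
  "finite P \<Longrightarrow> max_red_degree E P \<le> m \<longleftrightarrow> (\<forall>U\<in>P. red_degree E P U \<le> m)"
  by (simp add: max_red_degree_def)

lemma not_red_edge_singletons: "\<not> red_edge E {u} {w}"
  by (simp add: red_edge_def)

lemma max_red_degree_pair_partition_le: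
  assumes "finite V"
  shows "max_red_degree E (pair_partition V x y) \<le> max 1 (card (distinguishers V E {x, y}))"
proof -
  have pp: "pair_partition V x y = insert {x, y} ((\<lambda>w. {w}) ` (V - {x, y}))"
    unfolding pair_partition_def by auto
  have "red_degree E (pair_partition V x y) U \<le> max 1 (card (distinguishers V E {x, y}))"
    if "U \<in> pair_partition V x y" for U
  proof (cases "U = {x, y}")
    case True
    have "{W \<in> pair_partition V x y. W \<noteq> U \<and> red_edge E U W}
        \<subseteq> (\<lambda>w. {w}) ` distinguishers V E {x, y}"
      using True by (auto simp: pp red_edge_def mem_distinguishers_pair_iff)
    then have "red_degree E (pair_partition V x y) U \<le> card ((\<lambda>w. {w}) ` distinguishers V E {x, y})"
      unfolding red_degree_def using assms by (intro card_mono) (auto simp: finite_distinguishers)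
    also have "\<dots> \<le> card (distinguishers V E {x, y})"
      by (rule card_image_le) (simp add: assms finite_distinguishers)
    finally show ?thesis by simp
  next
    case False
    then have "U \<in> (\<lambda>w. {w}) ` (V - {x, y})" using that pp by simp
    then obtain u where "U = {u}" by blast
    then have "{W \<in> pair_partition V x y. W \<noteq> U \<and> red_edge E U W} \<subseteq> {{x, y}}"
      by (auto simp: pp not_red_edge_singletons)
    then have "red_degree E (pair_partition V x y) U \<le> card {{x, y}}"
      unfolding red_degree_def by (intro card_mono) auto
    then show ?thesis by simp
  qed
  then show ?thesis using assms by (simp add: max_red_degree_le_iff pp)
qed

lemma lb1_le_max_red_degree_pair_partition:
  assumes "finite V" "x \<in> V" "y \<in> V" "x \<noteq> y"
  shows "lb1 V E \<le> max_red_degree E (pair_partition V x y)"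
proof -
  have "{max_red_degree E (pair_partition V u v) | u v. u \<in> V \<and> v \<in> V \<and> u \<noteq> v}
      \<subseteq> (\<lambda>(u, v). max_red_degree E (pair_partition V u v)) ` (V \<times> V)"
    by auto
  then have "finite {max_red_degree E (pair_partition V u v) | u v. u \<in> V \<and> v \<in> V \<and> u \<noteq> v}"
    using assms(1) finite_subset by blast
  then show ?thesis unfolding lb1_def using assms by (intro Min_le) blast+
qed

lemma card_part_le_2_if_width_le_lb1:
  assumes "finite V" "\<forall>u v. E u v \<longrightarrow> E v u" "partition_on V Q" "Z \<in> Q"
    and width: "max_red_degree E Q \<le> lb1 V E"
    and excess: "2 * (card V - card Q) \<le> lb1 V E + 1"
  shows "card Z \<le> 2"
proof (rule ccontr)
  assume "\<not> card Z \<le> 2"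
  moreover have "card Z + card Q \<le> card V + 1"
    using card_part_add_sum_card_parts_le[OF assms(1,3,4), of "{}"] by simp
  ultimately have "3 \<le> lb1 V E" using excess by linarith
  have "\<forall>x\<in>V. \<forall>y\<in>V. x \<noteq> y \<longrightarrow> lb1 V E \<le> card (distinguishers V E {x, y})"
  proof (intro ballI impI)
    fix x y assume "x \<in> V" "y \<in> V" "x \<noteq> y"
    then have "lb1 V E \<le> max 1 (card (distinguishers V E {x, y}))"
      using lb1_le_max_red_degree_pair_partition[OF assms(1)]
        max_red_degree_pair_partition_le[OF assms(1), of E x y] by (meson le_trans)
    with \<open>3 \<le> lb1 V E\<close> show "lb1 V E \<le> card (distinguishers V E {x, y})"
      by (simp add: max_def split: if_splits)
  qed
  then have "3 * lb1 V E + 2 * card Q + 2 \<le> 2 * red_degree E Q Z + 2 * card V"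
    using red_degree_of_part_with_three_vertices[OF assms(1-4)] \<open>\<not> card Z \<le> 2\<close> by simp
  moreover have "red_degree E Q Z \<le> lb1 V E"
    using width assms(4) finite_elements[OF assms(1,3)] by (simp add: max_red_degree_le_iff)
  ultimately show False using excess by linarith
qed

lemma max_red_degree_le_sequence_width:
  "k \<le> j \<Longrightarrow> j \<le> card V \<Longrightarrow> max_red_degree E (Ps j) \<le> sequence_width V E Ps k"
  unfolding sequence_width_def by (intro Max_ge) auto

theorem mainTheorem17:
  fixes V :: "'a set" and E :: "'a \<Rightarrow> 'a \<Rightarrow> bool"
    and n d lam mu k :: nat and Ps :: "nat \<Rightarrow> 'a set set"
  assumes "strongly_regular V E n d lam mu"
    and "n \<ge> 2"
    and "partial_contraction_sequence V Ps k"
    and "sequence_width V E Ps k \<le> lb1 V E"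
  shows "\<forall>i. k \<le> i \<and> i \<le> n \<and> real i \<ge> real n - of_int \<lceil>real (lb1 V E) / 2\<rceil>
           \<longrightarrow> (\<forall>P\<in>Ps i. card P \<le> 2)"
proof (intro allI impI ballI)
  fix i P
  assume i: "k \<le> i \<and> i \<le> n \<and> real i \<ge> real n - of_int \<lceil>real (lb1 V E) / 2\<rceil>"
    and "P \<in> Ps i"
  have graph: "finite V" "\<forall>u v. E u v \<longrightarrow> E v u" and "card V = n"
    using assms(1) by (auto simp: strongly_regular_def simple_graph_def)
  have "partition_on V (Ps i)" "card (Ps i) = i"
    using assms(3) i \<open>card V = n\<close> by (auto simp: partial_contraction_sequence_def)
  moreover have "max_red_degree E (Ps i) \<le> lb1 V E"
    using max_red_degree_le_sequence_width[of k i V E Ps] i \<open>card V = n\<close> assms(4) by linarith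
  moreover have "2 * (n - i) \<le> lb1 V E + 1"
  proof -
    have "real n - real i < real (lb1 V E) / 2 + 1"
      using i ceiling_correct[of "real (lb1 V E) / 2"] by linarith
    then show ?thesis using i by linarith
  qed
  ultimately show "card P \<le> 2"
    using card_part_le_2_if_width_le_lb1[OF graph _ \<open>P \<in> Ps i\<close>] \<open>card V = n\<close> by simp
qed

end
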